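(* For every integer $N\ge16$ there is a constant $C_N<\infty$ such that $\mathrm P(I,\widehat\omega)\,\mathrm P(I,\widehat{\dot\sigma})\le C_N$ for every interval $I\subset\mathbb R$; moreover $\mathrm P(I^\ell_r,\widehat\omega)\,\mathrm P(I^\ell_r,\widehat{\dot\sigma})\ge C_N^{-1}$ for all $I^\ell_r\in\mathcal D$.
   Context: $\mathrm P(I,\mu)=\int_{\mathbb R}\frac{|I|}{(|I|+\operatorname{dist}(x,I))^2}\,d\mu(x)$. Cantor intervals: fix an integer $N\ge16$. Set $I^0_1=[0,1]$. Each interval $I=[a,a+N^{-k}]$ of generation $k$ has two children of generation $k+1$: the left child $I_-=[a,a+N^{-k-1}]$ and the right child $I_+=[a+N^{-k}-N^{-k-1},a+N^{-k}]$. The $2^k$ intervals of generation $k$ are denoted $I^k_j$, $1\le j\le 2^k$, numbered left to right; $\mathcal D$ is the collection of all of them. $\dot z^k_j$ is the center of $I^k_j$. The Cantor set is $\mathsf E^{(N)}=\bigcap_{k}\bigcup_{j}I^k_j$. Redistributed Cantor measure: with $\eta=1/N$, $\widehat\omega$ is the unique Borel probability measure supported on $\mathsf E^{(N)}$ such that $\widehat\omega(I^1_1)=\widehat\omega(I^1_2)=\frac12$ and for every $I\in\mathcal D$ of generation $\ge1$: if $I$ is the left child of its parent then $\widehat\omega(I_-)=\frac{1+\eta}2\widehat\omega(I)$, $\widehat\omega(I_+)=\frac{1-\eta}2\widehat\omega(I)$; if $I$ is the right child of its parent then $\widehat\omega(I_-)=\frac{1-\eta}2\widehat\omega(I)$,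 $\widehat\omega(I_+)=\frac{1+\eta}2\widehat\omega(I)$. Weights: $\widehat s^k_j=N^{-2k}/\widehat\omega(I^k_j)$; $\widehat{\dot\sigma}=\sum_{k\ge0}\sum_{j=1}^{2^k}\widehat s^k_j\,\delta_{\dot z^k_j}$. *)

theory Defs
  imports "HOL-Probability.Probability"
begin

text \<open>Poisson-type functional P(I,mu) for a bounded interval I, with |I| = Sup I - Inf I
  and dist(x,I) = infdist x I. Valued in ennreal (it may a priori be infinite).\<close>
definition poisson_P :: "real set \<Rightarrow> real measure \<Rightarrow> ennreal" where
  "poisson_P I \<mu> =
     (\<integral>\<^sup>+ x. ennreal ((Sup I - Inf I) / ((Sup I - Inf I) + infdist x I)\<^sup>2) \<partial>\<mu>)"

text \<open>Left endpoints of the Cantor intervals I^k_j; here j is 0-based, 0 \<le> j < 2^k,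
  numbered left to right; the children of (k,j) are (k+1,2j) (left) and (k+1,2j+1) (right).\<close>
fun cantor_left :: "nat \<Rightarrow> nat \<Rightarrow> nat \<Rightarrow> real" where
  "cantor_left N 0 j = 0"
| "cantor_left N (Suc k) j =
     cantor_left N k (j div 2) +
     (if odd j then 1 / real N ^ k - 1 / real N ^ Suc k else 0)"

definition cantor_int :: "nat \<Rightarrow> nat \<Rightarrow> nat \<Rightarrow> real set" where
  "cantor_int N k j = {cantor_left N k j .. cantor_left N k j + 1 / real N ^ k}"

definition cantor_center :: "nat \<Rightarrow> nat \<Rightarrow> nat \<Rightarrow> real" where
  "cantor_center N k j = cantor_left N k j + 1 / (2 * real N ^ k)"

definition cantor_set :: "nat \<Rightarrow> real set" where
  "cantor_set N = (\<Inter>k. \<Union>j<2^k. cantor_int N k j)"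

definition redistributed_cantor_measure :: "nat \<Rightarrow> real measure \<Rightarrow> bool" where
  "redistributed_cantor_measure N \<omega> \<longleftrightarrow>
     prob_space \<omega> \<and> sets \<omega> = sets borel \<and>
     emeasure \<omega> (UNIV - cantor_set N) = 0 \<and>
     measure \<omega> (cantor_int N 1 0) = 1/2 \<and> measure \<omega> (cantor_int N 1 1) = 1/2 \<and>
     (\<forall>k\<ge>1. \<forall>j<2^k.
        (even j \<longrightarrow>
           measure \<omega> (cantor_int N (Suc k) (2*j)) = (1 + 1/real N) / 2 * measure \<omega> (cantor_int N k j) \<and>
           measure \<omega> (cantor_int N (Suc k) (2*j+1)) = (1 - 1/real N) / 2 * measure \<omega> (cantor_int N k j)) \<and>
        (odd j \<longrightarrow>
           measure \<omega> (cantor_int N (Suc k) (2*j)) = (1 - 1/real N) / 2 * measure \<omega> (cantor_int N k j) \<and>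
           measure \<omega> (cantor_int N (Suc k) (2*j+1)) = (1 + 1/real N) / 2 * measure \<omega> (cantor_int N k j)))"

definition cantor_weight :: "nat \<Rightarrow> real measure \<Rightarrow> nat \<Rightarrow> nat \<Rightarrow> real" where
  "cantor_weight N \<omega> k j = (1 / real N ^ (2*k)) / measure \<omega> (cantor_int N k j)"

definition sigma_dot :: "nat \<Rightarrow> real measure \<Rightarrow> real measure" where
  "sigma_dot N \<omega> = measure_of UNIV (sets borel)
     (\<lambda>A. \<Sum>k. \<Sum>j<2^k. ennreal (cantor_weight N \<omega> k j) * indicator A (cantor_center N k j))"

end

theory Submission
  imports Defs
begin

text \<open>
  Lower bound: P(I, \<mu>) \<ge> \<mu>(I) / |I|, and for I = I^k_j the product \<omega>(I) s^k_j equals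
  N^-2k = |I|^2, so the product of the two Poisson integrals is at least 1.

  Upper bound: let N^-(m+1) \<le> |I| < N^-m, let c be the midpoint of I and B_g the ball of radius
  N^-g around c. The Poisson kernel of I is dominated by a combination of the indicators of the
  B_g, g \<le> m, which gives P(I, \<mu>) \<le> (4 N^2 \<Sigma>_g N^2g \<mu>(B_g) + 4 \<mu>(\<real>)) / N^m.
  Let I^h_i be the deepest Cantor interval of generation h \<le> m met by B_h. For g \<le> h the ball B_g
  meets only the ancestor of I^h_i of generation g, whose \<omega>-mass is within a factor
  (32/15)^(h-g) of \<omega>(I^h_i), and whose \<sigma>-mass is a geometric series of ratio 64/(15 N^2) in the
  generations below it. For g > h the only atom of \<sigma> in B_g is the centre of I^h_i. With
  u = N^2h \<omega>(I^h_i) \<ge> 1 this yields \<Sigma>_g N^2g \<omega>(B_g) \<le> 2u and \<Sigma>_g N^2g \<sigma>(B_g) \<le> 8 N^2m / u,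
  and the two factors multiply to O(N^4).
\<close>

lemma cantor_left_child_bounds:
  assumes "1 \<le> N"
  shows "cantor_left N k (j div 2) \<le> cantor_left N (Suc k) j"
    and "cantor_left N (Suc k) j + 1 / real N ^ Suc k \<le> cantor_left N k (j div 2) + 1 / real N ^ k"
proof -
  have "1 / real N ^ Suc k \<le> 1 / real N ^ k"
    using assms by (simp add: divide_simps)
  then show "cantor_left N k (j div 2) \<le> cantor_left N (Suc k) j"
    and "cantor_left N (Suc k) j + 1 / real N ^ Suc k \<le> cantor_left N k (j div 2) + 1 / real N ^ k"
    by auto
qed

lemma cantor_int_child_subset:
  "1 \<le> N \<Longrightarrow> cantor_int N (Suc k) j \<subseteq> cantor_int N k (j div 2)"
  using cantor_left_child_bounds[of N k j] unfolding cantor_int_def by auto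

lemma cantor_int_descendant_subset:
  assumes "1 \<le> N" "g \<le> k"
  shows "cantor_int N k j \<subseteq> cantor_int N g (j div 2 ^ (k - g))"
proof -
  have "cantor_int N (g + t) j \<subseteq> cantor_int N g (j div 2 ^ t)" for t
  proof (induction t arbitrary: j)
    case (Suc t)
    have "cantor_int N (g + Suc t) j \<subseteq> cantor_int N (g + t) (j div 2)"
      using cantor_int_child_subset[OF assms(1), of "g + t" j] by simp
    also have "\<dots> \<subseteq> cantor_int N g (j div 2 ^ Suc t)"
      using Suc.IH[of "j div 2"] by (simp add: div_mult2_eq mult.commute)
    finally show ?case .
  qed simp
  from this[of "k - g"] show ?thesis using assms(2) by simp
qed

lemma cantor_int_0: "cantor_int N 0 j = {0..1}"
  by (simp add: cantor_int_def)

lemma div_power_diff_less: "(j::nat) < 2 ^ k \<Longrightarrow> g \<le> k \<Longrightarrow> j div 2 ^ (k - g) < 2 ^ g"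
  by (metis le_add_diff_inverse less_mult_imp_div_less power_add)

lemma card_div_power_eq_le: "card {j. j < 2 ^ k \<and> j div 2 ^ t = (i::nat)} \<le> 2 ^ t"
proof -
  have "{j. j < 2 ^ k \<and> j div 2 ^ t = i} \<subseteq> {i * 2 ^ t ..< (i + 1) * 2 ^ t}"
  proof
    fix j assume "j \<in> {j. j < 2 ^ k \<and> j div 2 ^ t = i}"
    then have "j = i * 2 ^ t + j mod 2 ^ t" using div_mult_mod_eq[of j "2 ^ t"] by simp
    moreover have "j mod 2 ^ t < 2 ^ t" "(i + 1) * 2 ^ t = i * 2 ^ t + 2 ^ t"
      by (simp_all add: algebra_simps)
    ultimately have "i * 2 ^ t \<le> j" "j < (i + 1) * 2 ^ t" by linarith+
    then show "j \<in> {i * 2 ^ t ..< (i + 1) * 2 ^ t}" by simp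
  qed
  then have "card {j. j < 2 ^ k \<and> j div 2 ^ t = i} \<le> card {i * 2 ^ t ..< (i + 1) * 2 ^ t}"
    by (intro card_mono) auto
  then show ?thesis by (simp add: algebra_simps)
qed

lemma cantor_left_gap:
  assumes "2 \<le> N" "j < j'" "j' < 2 ^ k"
  shows "cantor_left N k j + (real N - 1) / real N ^ k \<le> cantor_left N k j'"
  using assms(2,3)
proof (induction k arbitrary: j j')
  case (Suc k)
  define t where "t = 1 / real N ^ Suc k"
  have N: "real N \<ge> 2" and t0: "t > 0" using assms(1) by (simp_all add: t_def)
  have tk: "1 / real N ^ k = real N * t" unfolding t_def using N by (simp add: field_simps)
  have left: "cantor_left N (Suc k) i = cantor_left N k (i div 2) + (if odd i then real N * t - t else 0)" for i
    by (simp only: cantor_left.simps tk t_def[symmetric])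
  have step: "(real N - 1) / real N ^ Suc k = (real N - 1) * t" unfolding t_def by simp
  have Nt: "real N * t - t \<ge> 0" using N t0 by (simp add: algebra_simps)
  show ?case
  proof (cases "j div 2 = j' div 2")
    case True
    then have "even j" "odd j'" using Suc.prems(1) by presburger+
    then show ?thesis using True left[of j] left[of j'] step by (simp add: algebra_simps)
  next
    case False
    then have "j div 2 < j' div 2" using Suc.prems(1) by (simp add: div_le_mono le_less)
    moreover have "(real N - 1) / real N ^ k = (real N - 1) * (real N * t)"
      using tk by (metis times_divide_eq_right mult.right_neutral)
    ultimately have
      "cantor_left N k (j div 2) + (real N - 1) * (real N * t) \<le> cantor_left N k (j' div 2)"
      using Suc.IH Suc.prems(2) by auto
    moreover have "(real N - 1) * (real N * t) - real N * t + t - (real N - 1) * t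
        = (real N - 2) * (real N - 1) * t"
      by (simp add: algebra_simps)
    moreover have "(real N - 2) * (real N - 1) * t \<ge> 0" using N t0 by simp
    moreover have "cantor_left N (Suc k) j \<le> cantor_left N k (j div 2) + real N * t - t"
      "cantor_left N k (j' div 2) \<le> cantor_left N (Suc k) j'"
      using left[of j] left[of j'] Nt by auto
    ultimately show ?thesis using step by linarith
  qed
qed simp

lemma cantor_int_gap:
  assumes "2 \<le> N" "j < j'" "j' < 2 ^ k" "x \<in> cantor_int N k j" "y \<in> cantor_int N k j'"
  shows "(real N - 2) / real N ^ k \<le> y - x"
proof -
  have "(real N - 1) / real N ^ k = (real N - 2) / real N ^ k + 1 / real N ^ k"
    by (simp add: add_divide_distrib[symmetric])
  then show ?thesis
    using cantor_left_gap[OF assms(1-3)] assms(4,5) unfolding cantor_int_def by auto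
qed

lemma cantor_int_index_unique:
  assumes "2 \<le> N" "i < 2 ^ g" "i' < 2 ^ g" "x \<in> cantor_int N g i" "y \<in> cantor_int N g i'"
    and "\<bar>x - y\<bar> < (real N - 2) / real N ^ g"
  shows "i = i'"
  using cantor_int_gap[OF assms(1) _ assms(3,4,5)] cantor_int_gap[OF assms(1) _ assms(2,5,4)] assms(6)
  by (cases i i' rule: linorder_cases) auto

lemma cantor_center_in_int: "cantor_center N k j \<in> cantor_int N k j"
proof -
  have "1 / (2 * real N ^ k) \<le> 1 / real N ^ k"
    using divide_left_mono[of "real N ^ k" "2 * real N ^ k" 1] by (cases "real N ^ k = 0") (auto simp: power_0_left)
  then show ?thesis unfolding cantor_center_def cantor_int_def by auto
qed

lemma cantor_center_in_ancestor:
  "1 \<le> N \<Longrightarrow> g \<le> k \<Longrightarrow> cantor_center N k j \<in> cantor_int N g (j div 2 ^ (k - g))"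
  using cantor_int_descendant_subset cantor_center_in_int by blast

lemma cantor_center_dist_child:
  assumes "y \<in> cantor_int N (Suc k) j'" "j' div 2 = j"
  shows "1 / (2 * real N ^ k) - 1 / real N ^ Suc k \<le> \<bar>y - cantor_center N k j\<bar>"
proof (cases "odd j'")
  case True
  then have "cantor_left N (Suc k) j' = cantor_left N k j + 1 / real N ^ k - 1 / real N ^ Suc k"
    using assms(2) by simp
  then show ?thesis using assms(1) unfolding cantor_int_def cantor_center_def by auto
next
  case False
  then have "cantor_left N (Suc k) j' = cantor_left N k j"
    using assms(2) by simp
  then show ?thesis using assms(1) unfolding cantor_int_def cantor_center_def by auto
qed

lemma cantor_center_notin_deeper:
  assumes N: "3 \<le> N" and "k < g" "i < 2 ^ g" "j < 2 ^ k"
  shows "cantor_center N k j \<notin> cantor_int N g i"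
proof
  assume c: "cantor_center N k j \<in> cantor_int N g i"
  define i' where "i' = i div 2 ^ (g - Suc k)"
  have i': "i' < 2 ^ Suc k"
    unfolding i'_def using div_power_diff_less[OF assms(3), of "Suc k"] assms(2) by simp
  have "cantor_int N g i \<subseteq> cantor_int N (Suc k) i'"
    unfolding i'_def using cantor_int_descendant_subset[of N "Suc k" g i] N assms(2) by simp
  with c have c': "cantor_center N k j \<in> cantor_int N (Suc k) i'" by blast
  show False
  proof (cases "i' div 2 = j")
    case True
    have "1 / real N ^ Suc k < 1 / (2 * real N ^ k)"
      using N by (simp add: divide_simps)
    then show False using cantor_center_dist_child[OF c' True] by simp
  next
    case False
    have "cantor_center N k j \<in> cantor_int N k (i' div 2)"
      using c' cantor_int_child_subset[of N k i'] N by auto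
    moreover have "i' div 2 < 2 ^ k" using i' by auto
    ultimately have "j = i' div 2"
      using cantor_int_index_unique[of N j k "i' div 2" "cantor_center N k j"]
        cantor_center_in_int[of N k j] N assms(4) by simp
    with False show False by simp
  qed
qed

lemma closed_cantor_set: "closed (cantor_set N)"
  unfolding cantor_set_def cantor_int_def by (intro closed_INT ballI closed_Union) auto

lemma cantor_set_subset_generation: "cantor_set N \<subseteq> (\<Union>i<2 ^ g. cantor_int N g i)"
  unfolding cantor_set_def by blast

lemma cantor_set_subset_unit: "cantor_set N \<subseteq> {0..1}"
  using cantor_set_subset_generation[of N 0] by (simp add: cantor_int_0 lessThan_empty_iff)

lemma ennreal_suminf_comm:
  fixes F :: "nat \<Rightarrow> nat \<Rightarrow> ennreal"
  shows "(\<Sum>i. \<Sum>k. F i k) = (\<Sum>k. \<Sum>i. F i k)"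
proof -
  have "(\<Sum>i. \<Sum>k. F i k) = (\<Sum>i. \<integral>\<^sup>+k. F i k \<partial>count_space UNIV)"
    by (simp add: nn_integral_count_space_nat)
  also have "\<dots> = (\<integral>\<^sup>+k. (\<Sum>i. F i k) \<partial>count_space UNIV)"
    by (rule nn_integral_suminf[symmetric]) auto
  also have "\<dots> = (\<Sum>k. \<Sum>i. F i k)"
    by (simp add: nn_integral_count_space_nat)
  finally show ?thesis .
qed

lemma emeasure_measure_of_atoms:
  fixes w :: "nat \<Rightarrow> nat \<Rightarrow> ennreal" and z :: "nat \<Rightarrow> nat \<Rightarrow> 'a" and n :: "nat \<Rightarrow> nat"
  defines "\<mu> \<equiv> \<lambda>A. \<Sum>k. \<Sum>j<n k. w k j * indicator A (z k j)"
  assumes "A \<in> sets M"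
  shows "emeasure (measure_of (space M) (sets M) \<mu>) A = \<mu> A"
proof (rule emeasure_measure_of_sigma)
  show "sigma_algebra (space M) (sets M)" by (rule sets.sigma_algebra_axioms)
  show "positive (sets M) \<mu>" unfolding positive_def \<mu>_def by simp
  show "countably_additive (sets M) \<mu>"
  proof (rule countably_additiveI)
    fix A :: "nat \<Rightarrow> 'a set" assume "disjoint_family A"
    have "(\<Sum>i. \<mu> (A i)) = (\<Sum>k. \<Sum>i. \<Sum>j<n k. w k j * indicator (A i) (z k j))"
      unfolding \<mu>_def by (rule ennreal_suminf_comm)
    also have "\<dots> = (\<Sum>k. \<Sum>j<n k. \<Sum>i. w k j * indicator (A i) (z k j))"
      by (intro suminf_cong suminf_sum) (auto intro: summableI)
    also have "\<dots> = \<mu> (\<Union>i. A i)"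
      unfolding \<mu>_def using suminf_indicator[OF \<open>disjoint_family A\<close>] by simp
    finally show "(\<Sum>i. \<mu> (A i)) = \<mu> (\<Union>i. A i)" .
  qed
qed fact

lemma sets_sigma_dot: "sets (sigma_dot N \<omega>) = sets borel"
proof -
  have "sets (sigma_dot N \<omega>) = sigma_sets UNIV (sets borel)"
    unfolding sigma_dot_def by (rule sets_measure_of) simp
  then show ?thesis using sets.sigma_sets_eq[of borel] by simp
qed

lemma space_sigma_dot: "space (sigma_dot N \<omega>) = UNIV"
  using sets_eq_imp_space_eq[OF sets_sigma_dot] by simp

lemma emeasure_sigma_dot:
  "A \<in> sets borel \<Longrightarrow> emeasure (sigma_dot N \<omega>) A =
    (\<Sum>k. \<Sum>j<2 ^ k. ennreal (cantor_weight N \<omega> k j) * indicator A (cantor_center N k j))"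
  using emeasure_measure_of_atoms[where M = borel and n = "\<lambda>k. 2 ^ k"] unfolding sigma_dot_def by simp

lemma emeasure_sigma_dot_eq_0:
  assumes "1 \<le> N" "A \<in> sets borel" "A \<inter> {0..1} = {}"
  shows "emeasure (sigma_dot N \<omega>) A = 0"
proof -
  have "cantor_center N k j \<notin> A" for k j
    using cantor_center_in_ancestor[OF assms(1), of 0 k j] assms(3) by (auto simp: cantor_int_0)
  then show ?thesis by (simp add: emeasure_sigma_dot[OF assms(2)])
qed

lemma infdist_ge_dist_midpoint:
  fixes I :: "real set"
  assumes "bounded I" "I \<noteq> {}"
  shows "\<bar>x - (Inf I + Sup I) / 2\<bar> - (Sup I - Inf I) / 2 \<le> infdist x I"
  unfolding infdist_notempty[OF assms(2)]
proof (rule cINF_greatest[OF assms(2)])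
  fix y assume "y \<in> I"
  then have "Inf I \<le> y" "y \<le> Sup I"
    using assms(1) by (auto intro: cInf_lower cSup_upper bounded_imp_bdd_below bounded_imp_bdd_above)
  then have "\<bar>y - (Inf I + Sup I) / 2\<bar> \<le> (Sup I - Inf I) / 2"
    by (simp add: abs_le_iff field_simps)
  moreover have "\<bar>x - (Inf I + Sup I) / 2\<bar> \<le> \<bar>x - y\<bar> + \<bar>y - (Inf I + Sup I) / 2\<bar>"
    using abs_triangle_ineq[of "x - y" "y - (Inf I + Sup I) / 2"] by simp
  ultimately show "\<bar>x - (Inf I + Sup I) / 2\<bar> - (Sup I - Inf I) / 2 \<le> dist x y"
    unfolding dist_real_def by linarith
qed

lemma ex_less_transition: "P (0::nat) \<Longrightarrow> \<not> P m \<Longrightarrow> \<exists>g<m. P g \<and> \<not> P (Suc g)"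
  by (induction m) (auto intro: less_SucI)

text \<open>Here s is the distance of a point from the midpoint of an interval of length l and d its
  distance from the interval; s \<ge> l forces d \<ge> s/2 > 1/(2r).\<close>
lemma poisson_kernel_far_le:
  fixes l d r s :: real
  assumes "0 < l" "0 < r" "s - l / 2 \<le> d" "1 / r < s" "l \<le> s"
  shows "l / (l + d)\<^sup>2 \<le> 4 * l * r\<^sup>2"
proof -
  have "1 / (2 * r) = (1 / r) / 2" by simp
  then have "1 / (2 * r) \<le> d" using assms by linarith
  then have "(1 / (2 * r))\<^sup>2 \<le> (l + d)\<^sup>2" using assms by (intro power_mono) auto
  then have "l / (l + d)\<^sup>2 \<le> l / (1 / (2 * r))\<^sup>2" using assms by (intro divide_left_mono) auto
  also have "\<dots> = 4 * l * r\<^sup>2" using assms by (simp add: field_simps power2_eq_square)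
  finally show ?thesis .
qed

lemma poisson_kernel_le_balls:
  fixes I :: "real set"
  assumes N: "1 \<le> N" and I: "bounded I" "I \<noteq> {}"
    and l: "1 / real N ^ Suc m \<le> Sup I - Inf I" "Sup I - Inf I < 1 / real N ^ m"
  defines "l \<equiv> Sup I - Inf I" and "c \<equiv> (Inf I + Sup I) / 2"
  shows "l / (l + infdist x I)\<^sup>2
    \<le> real N ^ Suc m * indicator (cball c (1 / real N ^ m)) x
      + (\<Sum>g<m. 4 * l * real N ^ (2 * g + 2) * indicator (cball c (1 / real N ^ g)) x) + 4 * l"
    (is "_ \<le> ?top + ?S + _")
proof -
  define d where "d = infdist x I"
  have "0 < 1 / real N ^ Suc m" using N by simp
  then have l0: "0 < l" using l(1) unfolding l_def by linarith
  have d: "0 \<le> d" "\<bar>x - c\<bar> - l / 2 \<le> d"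
    unfolding d_def c_def l_def using infdist_ge_dist_midpoint[OF I] by (simp_all add: infdist_nonneg)
  have nonneg: "0 \<le> ?top" "0 \<le> ?S" using l0 by (auto intro: sum_nonneg)
  consider "x \<in> cball c (1 / real N ^ m)" | "x \<notin> cball c 1"
    | g where "g < m" "x \<in> cball c (1 / real N ^ g)" "x \<notin> cball c (1 / real N ^ Suc g)"
    using ex_less_transition[of "\<lambda>g. x \<in> cball c (1 / real N ^ g)" m] by force
  then have "l / (l + d)\<^sup>2 \<le> ?top + ?S + 4 * l"
  proof cases
    case 1
    have "l / (l + d)\<^sup>2 \<le> l / l\<^sup>2"
      using d l0 by (intro divide_left_mono power_mono) auto
    also have "\<dots> \<le> ?top"
      using 1 l(1) l0 N unfolding l_def[symmetric] by (simp add: power2_eq_square divide_simps mult_ac)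
    finally show ?thesis using nonneg l0 by linarith
  next
    case 2
    have "1 / real N ^ m \<le> 1" using N by (simp add: divide_simps)
    then have "l / (l + d)\<^sup>2 \<le> 4 * l * 1\<^sup>2"
      using 2 l(2) l0 d unfolding l_def[symmetric]
      by (intro poisson_kernel_far_le[of _ _ "\<bar>x - c\<bar>"]) (auto simp: dist_real_def)
    then have "l / (l + d)\<^sup>2 \<le> 4 * l" by simp
    then show ?thesis using nonneg by linarith
  next
    case (3 g)
    have "1 / real N ^ m \<le> 1 / real N ^ Suc g"
      using 3(1) N by (intro divide_left_mono power_increasing) auto
    then have "l / (l + d)\<^sup>2 \<le> 4 * l * (real N ^ Suc g)\<^sup>2"
      using 3(3) l(2) l0 d N unfolding l_def[symmetric]
      by (intro poisson_kernel_far_le[of _ _ "\<bar>x - c\<bar>"]) (auto simp: dist_real_def)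
    also have "\<dots> = 4 * l * real N ^ (2 * g + 2) * indicator (cball c (1 / real N ^ g)) x"
      using 3(2) by (simp add: power_mult_distrib power2_eq_square mult_2 power_add flip: power_add)
    also have "\<dots> \<le> ?S"
      using 3(1) l0 by (intro member_le_sum) auto
    finally show ?thesis using nonneg l0 by linarith
  qed
  then show ?thesis unfolding d_def .
qed

definition ball_mass_sum :: "nat \<Rightarrow> real measure \<Rightarrow> real \<Rightarrow> nat \<Rightarrow> real" where
  "ball_mass_sum N \<mu> c m = (\<Sum>g\<le>m. real N ^ (2 * g) * measure \<mu> (cball c (1 / real N ^ g)))"

lemma ball_terms_le_weighted_sum:
  fixes a :: "nat \<Rightarrow> real"
  assumes N: "1 \<le> N" and a: "\<And>g. 0 \<le> a g" and M: "0 \<le> M" and l: "0 < l" "l < 1 / real N ^ m"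
  shows "real N ^ Suc m * a m + (\<Sum>g<m. 4 * l * real N ^ (2 * g + 2) * a g) + 4 * l * M
    \<le> (4 * real N ^ 2 * (\<Sum>g\<le>m. real N ^ (2 * g) * a g) + 4 * M) / real N ^ m"
proof -
  have Nm: "0 < real N ^ m" using N by simp
  have lNm: "0 \<le> l * real N ^ m" "l * real N ^ m \<le> 1" using l Nm by (simp_all add: field_simps)
  have "real N ^ Suc m * real N ^ m = real N * real N ^ (2 * m)"
    by (simp add: power_add[symmetric] mult_2)
  also have "\<dots> \<le> 4 * real N ^ 2 * real N ^ (2 * m)"
    using N by (intro mult_right_mono) (auto simp: power2_eq_square)
  finally have "real N ^ Suc m * a m * real N ^ m \<le> 4 * real N ^ 2 * (real N ^ (2 * m) * a m)"
    using a[of m] mult_right_mono by (fastforce simp: mult_ac)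
  then have top: "real N ^ Suc m * a m \<le> 4 * real N ^ 2 * (real N ^ (2 * m) * a m) / real N ^ m"
    using Nm by (simp add: field_simps)
  have "4 * l * real N ^ (2 * g + 2) * a g * real N ^ m
      = (l * real N ^ m) * (4 * real N ^ 2 * (real N ^ (2 * g) * a g))" for g
    by (simp add: power_add algebra_simps power2_eq_square)
  also have "\<dots> g \<le> 4 * real N ^ 2 * (real N ^ (2 * g) * a g)" for g
    using lNm a[of g] by (intro mult_left_le_one_le) auto
  finally have "4 * l * real N ^ (2 * g + 2) * a g \<le> 4 * real N ^ 2 * (real N ^ (2 * g) * a g) / real N ^ m" for g
    using Nm by (simp add: field_simps)
  then have middle: "(\<Sum>g<m. 4 * l * real N ^ (2 * g + 2) * a g)
      \<le> 4 * real N ^ 2 * (\<Sum>g<m. real N ^ (2 * g) * a g) / real N ^ m"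
    by (simp add: sum_distrib_left sum_divide_distrib sum_mono)
  have "4 * l * M * real N ^ m \<le> 4 * M"
    using lNm M mult_left_le_one_le[of "4 * M" "l * real N ^ m"] by (simp add: mult_ac)
  then have bottom: "4 * l * M \<le> 4 * M / real N ^ m"
    using Nm by (simp add: field_simps)
  have "(\<Sum>g\<le>m. real N ^ (2 * g) * a g) = (\<Sum>g<m. real N ^ (2 * g) * a g) + real N ^ (2 * m) * a m"
    by (simp add: lessThan_Suc_atMost[symmetric])
  then show ?thesis
    using top middle bottom by (simp add: add_divide_distrib distrib_left)
qed

lemma poisson_P_le_ball_mass_sum:
  fixes I :: "real set" and \<mu> :: "real measure"
  assumes N: "1 \<le> N" and \<mu>: "sets \<mu> = sets borel" "finite_measure \<mu>" and I: "bounded I" "I \<noteq> {}"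
    and l: "1 / real N ^ Suc m \<le> Sup I - Inf I" "Sup I - Inf I < 1 / real N ^ m"
  shows "poisson_P I \<mu>
    \<le> ennreal ((4 * real N ^ 2 * ball_mass_sum N \<mu> ((Inf I + Sup I) / 2) m + 4 * measure \<mu> UNIV) / real N ^ m)"
proof -
  interpret finite_measure \<mu> by (fact \<mu>(2))
  define l where "l = Sup I - Inf I"
  define U where "U g = cball ((Inf I + Sup I) / 2) (1 / real N ^ g)" for g
  define F where "F x = real N ^ Suc m * indicator (U m) x
    + (\<Sum>g<m. 4 * l * real N ^ (2 * g + 2) * indicator (U g) x) + 4 * l" for x
  have "0 < 1 / real N ^ Suc m" using N by simp
  then have l0: "0 < l" using l(1) unfolding l_def by linarith
  have U: "U g \<in> sets \<mu>" for g
    unfolding U_def \<mu>(1) by (simp add: borel_closed)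
  have integrable_indicator: "integrable \<mu> (indicator (U g) :: real \<Rightarrow> real)" for g
    using U by (simp add: emeasure_eq_measure)
  have space: "space \<mu> = UNIV" using sets_eq_imp_space_eq[OF \<mu>(1)] by simp
  have "poisson_P I \<mu> \<le> (\<integral>\<^sup>+x. ennreal (F x) \<partial>\<mu>)"
    unfolding poisson_P_def using poisson_kernel_le_balls[OF N I l]
    by (intro nn_integral_mono ennreal_leI) (simp add: F_def U_def l_def)
  also have "\<dots> = ennreal (\<integral>x. F x \<partial>\<mu>)"
  proof (rule nn_integral_eq_integral)
    show "integrable \<mu> F" using integrable_indicator unfolding F_def
      by (intro Bochner_Integration.integrable_add integrable_mult_right integrable_const Bochner_Integration.integrable_sum)
    show "AE x in \<mu>. 0 \<le> F x"
      using l0 unfolding F_def by (intro AE_I2 add_nonneg_nonneg sum_nonneg) auto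
  qed
  also have "(\<integral>x. F x \<partial>\<mu>) = real N ^ Suc m * measure \<mu> (U m)
      + (\<Sum>g<m. 4 * l * real N ^ (2 * g + 2) * measure \<mu> (U g)) + 4 * l * measure \<mu> UNIV"
    using integrable_indicator unfolding F_def by (simp add: space del: sum_mult_indicator)
  also have "\<dots> \<le> (4 * real N ^ 2 * ball_mass_sum N \<mu> ((Inf I + Sup I) / 2) m + 4 * measure \<mu> UNIV) / real N ^ m"
    unfolding ball_mass_sum_def U_def using l(2) l0 N unfolding l_def[symmetric]
    by (intro ball_terms_le_weighted_sum) auto
  finally show ?thesis by (simp add: ennreal_leI)
qed

lemma poisson_P_eq_0: "Sup I - Inf I = 0 \<Longrightarrow> poisson_P I \<mu> = 0"
  unfolding poisson_P_def by simp

lemma poisson_P_le_emeasure_space: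
  assumes "1 \<le> Sup I - Inf I"
  shows "poisson_P I \<mu> \<le> emeasure \<mu> (space \<mu>)"
proof -
  have "(Sup I - Inf I) / (Sup I - Inf I + infdist x I)\<^sup>2 \<le> 1" for x
  proof -
    define l where "l = Sup I - Inf I"
    have "l / (l + infdist x I)\<^sup>2 \<le> l / l\<^sup>2"
      using assms infdist_nonneg[of x I] unfolding l_def by (intro divide_left_mono power_mono) auto
    also have "\<dots> \<le> 1" using assms unfolding l_def by (simp add: power2_eq_square)
    finally show ?thesis unfolding l_def .
  qed
  then have "poisson_P I \<mu> \<le> (\<integral>\<^sup>+x. 1 \<partial>\<mu>)"
    unfolding poisson_P_def by (intro nn_integral_mono) (simp add: ennreal_le_1)
  then show ?thesis by simp
qed

lemma poisson_P_atLeastAtMost_ge: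
  fixes a r :: real
  assumes "0 < r" "{a..a + r} \<in> sets \<mu>"
  shows "ennreal (1 / r) * emeasure \<mu> {a..a + r} \<le> poisson_P {a..a + r} \<mu>"
proof -
  have "ennreal (1 / r) * emeasure \<mu> {a..a + r} = (\<integral>\<^sup>+x. ennreal (1 / r) * indicator {a..a + r} x \<partial>\<mu>)"
    by (rule nn_integral_cmult_indicator[OF assms(2), symmetric])
  also have "\<dots> \<le> poisson_P {a..a + r} \<mu>"
    unfolding poisson_P_def using assms(1)
    by (intro nn_integral_mono) (auto simp: indicator_def power2_eq_square)
  finally show ?thesis .
qed

lemma exists_power_scale:
  assumes "2 \<le> N" "0 < l" "l < 1"
  obtains m where "1 / real N ^ Suc m \<le> l" "l < 1 / real N ^ m"
proof -
  obtain n0 where "(1 / real N) ^ n0 < l"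
    using real_arch_pow_inv[of l "1 / real N"] assms by auto
  then have ex: "\<exists>n. \<not> l < 1 / real N ^ n" by (metis power_one_over order.asym)
  define n where "n = (LEAST n. \<not> l < 1 / real N ^ n)"
  have "\<not> l < 1 / real N ^ n" unfolding n_def using LeastI_ex[OF ex] .
  moreover have "n \<noteq> 0" using calculation assms(3) by (intro notI) simp
  moreover have "l < 1 / real N ^ (n - 1)"
    using not_less_Least[of "n - 1" "\<lambda>n. \<not> l < 1 / real N ^ n"] calculation by (simp add: n_def)
  ultimately show thesis by (intro that[of "n - 1"]) auto
qed

lemma sum_power_mult_power_diff_le:
  fixes x \<rho> :: real
  assumes "0 \<le> \<rho>" "2 * \<rho> \<le> x"
  shows "(\<Sum>g\<le>h. x ^ g * \<rho> ^ (h - g)) \<le> 2 * x ^ h"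
proof (induction h)
  case (Suc h)
  have "(\<Sum>g\<le>Suc h. x ^ g * \<rho> ^ (Suc h - g)) = \<rho> * (\<Sum>g\<le>h. x ^ g * \<rho> ^ (h - g)) + x ^ Suc h"
    by (simp add: sum_distrib_left Suc_diff_le mult_ac)
  also have "\<dots> \<le> \<rho> * (2 * x ^ h) + x ^ Suc h"
    using Suc.IH assms(1) by (simp add: mult_left_mono)
  also have "\<rho> * (2 * x ^ h) \<le> x ^ Suc h"
    using assms mult_right_mono[OF assms(2), of "x ^ h"] by (simp add: mult_ac)
  finally show ?case by simp
qed simp

lemma sum_power_diff_le:
  fixes q :: real
  assumes "0 \<le> q" "q < 1"
  shows "(\<Sum>g\<le>h. q ^ (h - g)) \<le> 1 / (1 - q)"
proof (induction h)
  case 0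
  show ?case using assms by (simp add: divide_simps)
next
  case (Suc h)
  have "(\<Sum>g\<le>Suc h. q ^ (Suc h - g)) = q * (\<Sum>g\<le>h. q ^ (h - g)) + 1"
    by (simp add: sum_distrib_left Suc_diff_le)
  also have "\<dots> \<le> q * (1 / (1 - q)) + 1"
    using Suc.IH assms(1) by (intro add_right_mono mult_left_mono)
  also have "\<dots> = 1 / (1 - q)"
    using assms(2) by (simp add: field_simps)
  finally show ?case .
qed

lemma balanced_product_le:
  fixes n x u a b :: real
  assumes n: "1 \<le> n" and x: "1 \<le> x" and u: "1 \<le> u" "u \<le> x\<^sup>2"
    and a: "0 \<le> a" "a \<le> 2 * u" and b: "0 \<le> b" "b \<le> 8 * x\<^sup>2 / u"
  shows "(4 * n\<^sup>2 * a + 4) / x * ((4 * n\<^sup>2 * b + 8) / x) \<le> 500 * n ^ 4"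
proof -
  have "4 * n\<^sup>2 * a \<le> 4 * n\<^sup>2 * (2 * u)" "4 * n\<^sup>2 * b \<le> 4 * n\<^sup>2 * (8 * x\<^sup>2 / u)"
    using a b by (intro mult_left_mono; simp)+
  then have "(4 * n\<^sup>2 * a + 4) / x * ((4 * n\<^sup>2 * b + 8) / x)
      \<le> (8 * n\<^sup>2 * u + 4) / x * ((32 * n\<^sup>2 * x\<^sup>2 / u + 8) / x)"
    using a b x u by (intro mult_mono divide_right_mono) auto
  also have "\<dots> = 256 * n ^ 4 + 64 * n\<^sup>2 * (u / x\<^sup>2) + 128 * n\<^sup>2 * (1 / u) + 32 * (1 / x\<^sup>2)"
    using x u by (simp add: field_simps power2_eq_square) (simp add: power4_eq_xxxx)
  also have "\<dots> \<le> 256 * n ^ 4 + 64 * n\<^sup>2 * 1 + 128 * n\<^sup>2 * 1 + 32 * 1"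
    using x u by (intro add_mono mult_left_mono) (auto simp: divide_simps)
  also have "\<dots> \<le> 500 * n ^ 4"
    using n power_increasing[of 2 4 n] one_le_power[of n 4] by linarith
  finally show ?thesis .
qed

definition cantor_hits :: "nat \<Rightarrow> real \<Rightarrow> nat \<Rightarrow> nat \<Rightarrow> bool" where
  "cantor_hits N c g i \<longleftrightarrow> i < 2 ^ g \<and> cball c (1 / real N ^ g) \<inter> cantor_int N g i \<noteq> {}"

lemma cantor_hits_unique:
  assumes N: "5 \<le> N" and "cantor_hits N c g i" "cantor_hits N c g i'"
  shows "i = i'"
proof -
  obtain x y where x: "x \<in> cball c (1 / real N ^ g)" "x \<in> cantor_int N g i"
    and y: "y \<in> cball c (1 / real N ^ g)" "y \<in> cantor_int N g i'"
    using assms(2,3) unfolding cantor_hits_def by blast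
  have "\<bar>x - y\<bar> \<le> 2 / real N ^ g"
    using x(1) y(1) by (simp add: dist_real_def abs_le_iff)
  also have "\<dots> < (real N - 2) / real N ^ g"
    using N by (simp add: divide_simps)
  finally show ?thesis
    using cantor_int_index_unique[OF _ _ _ x(2) y(2)] assms unfolding cantor_hits_def by simp
qed

lemma cball_power_antimono:
  "1 \<le> N \<Longrightarrow> g \<le> g' \<Longrightarrow> cball c (1 / real N ^ g') \<subseteq> cball c (1 / real N ^ g)"
  by (intro subset_cball divide_left_mono power_increasing) auto

locale redistributed_cantor =
  fixes N :: nat and \<omega> :: "real measure"
  assumes N_ge_16: "16 \<le> N" and redistributed: "redistributed_cantor_measure N \<omega>"
begin

lemma sets_\<omega>: "sets \<omega> = sets borel"
  and null_outside_cantor_set: "emeasure \<omega> (UNIV - cantor_set N) = 0"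
  using redistributed unfolding redistributed_cantor_measure_def by auto

sublocale prob_space \<omega>
  using redistributed unfolding redistributed_cantor_measure_def by auto

lemma space_\<omega>: "space \<omega> = UNIV"
  using sets_eq_imp_space_eq[OF sets_\<omega>] by simp

lemma measure_le_if_cantor_subset:
  assumes "A \<in> sets borel" "B \<in> sets borel" "A \<inter> cantor_set N \<subseteq> B"
  shows "measure \<omega> A \<le> measure \<omega> B"
proof -
  have outside: "UNIV - cantor_set N \<in> sets \<omega>"
    using closed_cantor_set[of N] by (simp add: sets_\<omega> borel_closed sets.compl_sets)
  have "emeasure \<omega> A \<le> emeasure \<omega> (B \<union> (UNIV - cantor_set N))"
    using assms outside by (intro emeasure_mono) (auto simp: sets_\<omega>)
  also have "\<dots> \<le> emeasure \<omega> B + emeasure \<omega> (UNIV - cantor_set N)"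
    using assms outside by (intro emeasure_subadditive) (auto simp: sets_\<omega>)
  finally show ?thesis using null_outside_cantor_set by (simp add: emeasure_eq_measure)
qed

lemma measure_eq_0_if_disjoint_cantor_set:
  "A \<in> sets borel \<Longrightarrow> A \<inter> cantor_set N = {} \<Longrightarrow> measure \<omega> A = 0"
  using measure_le_if_cantor_subset[of A "{}"] measure_nonneg[of \<omega> A] by simp

lemma measure_cantor_int_0: "measure \<omega> (cantor_int N 0 j) = 1"
proof (rule antisym)
  have "measure \<omega> UNIV \<le> measure \<omega> (cantor_int N 0 j)"
    using cantor_set_subset_unit[of N] by (intro measure_le_if_cantor_subset) (auto simp: cantor_int_0)
  then show "1 \<le> measure \<omega> (cantor_int N 0 j)" using prob_space space_\<omega> by simp
qed (rule prob_le_1)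

lemma measure_cantor_int_child_bounds:
  assumes "j < 2 ^ Suc k"
  shows "15/32 * measure \<omega> (cantor_int N k (j div 2)) \<le> measure \<omega> (cantor_int N (Suc k) j)"
    and "measure \<omega> (cantor_int N (Suc k) j) \<le> 17/32 * measure \<omega> (cantor_int N k (j div 2))"
proof -
  define p where "p = measure \<omega> (cantor_int N k (j div 2))"
  define q where "q = measure \<omega> (cantor_int N (Suc k) j)"
  have eta: "15/32 \<le> (1 - 1 / real N) / 2" "(1 + 1 / real N) / 2 \<le> 17/32"
    "15/32 \<le> (1 + 1 / real N) / 2" "(1 - 1 / real N) / 2 \<le> 17/32"
    using N_ge_16 by (simp_all add: field_simps)
  obtain r where r: "q = r * p" "15/32 \<le> r" "r \<le> 17/32"
  proof (cases k)
    case 0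
    then have "j = 0 \<or> j = 1" using assms by auto
    then have "q = 1/2 * p"
      using redistributed measure_cantor_int_0[of 0] 0
      unfolding redistributed_cantor_measure_def p_def q_def by auto
    then show thesis by (rule that) simp_all
  next
    case (Suc k')
    have "j div 2 < 2 ^ k" "j = 2 * (j div 2) \<or> j = 2 * (j div 2) + 1" using assms by auto
    then consider "q = (1 + 1 / real N) / 2 * p" | "q = (1 - 1 / real N) / 2 * p"
      using redistributed Suc unfolding redistributed_cantor_measure_def p_def q_def
      by (smt (verit, best) One_nat_def le_add1 plus_1_eq_Suc)
    then show thesis
    proof cases
      case 1 show thesis using eta by (intro that[OF 1])
    next
      case 2 show thesis using eta by (intro that[OF 2])
    qed
  qed
  have "0 \<le> p" by (simp add: p_def)
  then show "15/32 * p \<le> q" "q \<le> 17/32 * p"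
    unfolding r(1) using r(2,3) mult_right_mono by blast+
qed

lemma measure_cantor_int_descendant_bounds:
  assumes "j < 2 ^ k" "g \<le> k"
  shows "(15/32) ^ (k - g) * measure \<omega> (cantor_int N g (j div 2 ^ (k - g))) \<le> measure \<omega> (cantor_int N k j)"
    and "measure \<omega> (cantor_int N k j) \<le> (17/32) ^ (k - g) * measure \<omega> (cantor_int N g (j div 2 ^ (k - g)))"
proof -
  have "(15/32) ^ t * measure \<omega> (cantor_int N g (j div 2 ^ t)) \<le> measure \<omega> (cantor_int N (g + t) j) \<and>
        measure \<omega> (cantor_int N (g + t) j) \<le> (17/32) ^ t * measure \<omega> (cantor_int N g (j div 2 ^ t))"
    if "j < 2 ^ (g + t)" for j t
    using that
  proof (induction t arbitrary: j)
    case (Suc t)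
    have parent: "j div 2 div 2 ^ t = j div 2 ^ Suc t" by (simp add: div_mult2_eq mult.commute)
    have "j div 2 < 2 ^ (g + t)" using Suc.prems by auto
    with Suc.IH[of "j div 2"] measure_cantor_int_child_bounds[of j "g + t"] Suc.prems parent
    show ?case by (auto intro: order_trans mult_left_mono)
  qed simp
  from this[of j "k - g"] assms show
    "(15/32) ^ (k - g) * measure \<omega> (cantor_int N g (j div 2 ^ (k - g))) \<le> measure \<omega> (cantor_int N k j)"
    "measure \<omega> (cantor_int N k j) \<le> (17/32) ^ (k - g) * measure \<omega> (cantor_int N g (j div 2 ^ (k - g)))"
    by simp_all
qed

lemma measure_cantor_int_lower: "j < 2 ^ k \<Longrightarrow> (15/32) ^ k \<le> measure \<omega> (cantor_int N k j)"
  using measure_cantor_int_descendant_bounds(1)[of j k 0] measure_cantor_int_0 by simp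

lemma measure_cantor_int_pos: "j < 2 ^ k \<Longrightarrow> 0 < measure \<omega> (cantor_int N k j)"
  using measure_cantor_int_lower[of j k] zero_less_power[of "15/32::real" k] by linarith

abbreviation \<sigma> :: "real measure" where "\<sigma> \<equiv> sigma_dot N \<omega>"

lemma cantor_weight_nonneg: "0 \<le> cantor_weight N \<omega> k j"
  unfolding cantor_weight_def by simp

lemma cantor_weight_le_ancestor:
  assumes "j < 2 ^ k" "g \<le> k"
  shows "cantor_weight N \<omega> k j
    \<le> (32/15) ^ (k - g) / (real N ^ (2 * k) * measure \<omega> (cantor_int N g (j div 2 ^ (k - g))))"
proof -
  define p where "p = measure \<omega> (cantor_int N g (j div 2 ^ (k - g)))"
  have "0 < p" unfolding p_def using measure_cantor_int_pos div_power_diff_less assms by blast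
  then have "0 < (15/32) ^ (k - g) * p" by simp
  moreover have "(15/32) ^ (k - g) * p \<le> measure \<omega> (cantor_int N k j)"
    unfolding p_def by (rule measure_cantor_int_descendant_bounds(1)[OF assms])
  ultimately have "cantor_weight N \<omega> k j \<le> 1 / real N ^ (2 * k) / ((15/32) ^ (k - g) * p)"
    unfolding cantor_weight_def by (intro divide_left_mono) auto
  also have "\<dots> = (32/15) ^ (k - g) / (real N ^ (2 * k) * p)"
    by (simp add: power_divide field_simps)
  finally show ?thesis unfolding p_def .
qed

lemma sigma_dot_generation_eq_0:
  assumes "k < g" "i < 2 ^ g"
    and sub: "\<And>j. j < 2 ^ k \<Longrightarrow> cantor_center N k j \<in> A \<Longrightarrow> cantor_center N k j \<in> cantor_int N g i"
  shows "(\<Sum>j<2 ^ k. ennreal (cantor_weight N \<omega> k j) * indicator A (cantor_center N k j)) = 0"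
proof -
  have "cantor_center N k j \<notin> A" if "j < 2 ^ k" for j
    using sub[OF that] cantor_center_notin_deeper[OF _ assms(1,2) that] N_ge_16 by auto
  then show ?thesis by simp
qed

text \<open>At most 2^(k-g) centres of generation k lie in I^g_i, each of weight at most
  (32/15)^(k-g) N^-2k / \<omega>(I^g_i).\<close>
lemma sigma_dot_generation_le:
  assumes "g \<le> k" and i: "i < 2 ^ g"
    and sub: "\<And>j. j < 2 ^ k \<Longrightarrow> cantor_center N k j \<in> A \<Longrightarrow> cantor_center N k j \<in> cantor_int N g i"
  shows "(\<Sum>j<2 ^ k. ennreal (cantor_weight N \<omega> k j) * indicator A (cantor_center N k j))
    \<le> ennreal ((64 / (15 * real N ^ 2)) ^ (k - g) / (real N ^ (2 * g) * measure \<omega> (cantor_int N g i)))"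
proof -
  define t where "t = k - g"
  define W where "W = (32/15) ^ t / (real N ^ (2 * k) * measure \<omega> (cantor_int N g i))"
  have W: "0 \<le> W" unfolding W_def using measure_cantor_int_pos[OF i] by simp
  have each: "cantor_weight N \<omega> k j * indicator A (cantor_center N k j)
      \<le> (if j div 2 ^ t = i then W else 0)" if j: "j < 2 ^ k" for j
  proof (cases "cantor_center N k j \<in> A")
    case True
    have "cantor_center N k j \<in> cantor_int N g (j div 2 ^ t)"
      using cantor_center_in_ancestor[of N g k j] N_ge_16 assms(1) by (simp add: t_def)
    then have "j div 2 ^ t = i"
      using cantor_int_index_unique[OF _ div_power_diff_less[OF j] i _ sub[OF j True]] N_ge_16 assms(1)
      by (simp add: t_def)
    then show ?thesis
      using True cantor_weight_le_ancestor[OF j assms(1)] by (simp add: W_def t_def)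
  qed (simp add: W)
  have "(\<Sum>j<2 ^ k. cantor_weight N \<omega> k j * indicator A (cantor_center N k j))
      \<le> (\<Sum>j<2 ^ k. if j div 2 ^ t = i then W else 0)"
    using each by (intro sum_mono) auto
  also have "\<dots> = real (card {j. j < 2 ^ k \<and> j div 2 ^ t = i}) * W"
    by (simp add: sum.If_cases Collect_conj_eq lessThan_def Int_commute)
  also have "\<dots> \<le> 2 ^ t * W"
    using card_div_power_eq_le[of k t i] W by (intro mult_right_mono) (auto simp flip: of_nat_le_iff)
  also have "2 ^ t * W
      = (64 / (15 * real N ^ 2)) ^ t / (real N ^ (2 * g) * measure \<omega> (cantor_int N g i))"
  proof -
    have "k = g + t" "(64::real) ^ t = 2 ^ t * 32 ^ t" "(real N ^ t)\<^sup>2 = (real N)\<^sup>2 ^ t" using assms(1)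
      by (simp_all add: t_def power_mult_distrib[symmetric] mult.commute flip: power_mult)
    then show ?thesis unfolding W_def
      by (simp add: power_divide power_mult_distrib power_add power_mult field_simps)
  qed
  finally have "(\<Sum>j<2 ^ k. cantor_weight N \<omega> k j * indicator A (cantor_center N k j))
      \<le> (64 / (15 * real N ^ 2)) ^ t / (real N ^ (2 * g) * measure \<omega> (cantor_int N g i))" .
  moreover have "(\<Sum>j<2 ^ k. ennreal (cantor_weight N \<omega> k j) * indicator A (cantor_center N k j))
      = ennreal (\<Sum>j<2 ^ k. cantor_weight N \<omega> k j * indicator A (cantor_center N k j))"
    by (subst sum_ennreal[symmetric]) (auto simp: cantor_weight_nonneg ennreal_mult' ennreal_indicator)
  ultimately show ?thesis by (simp add: t_def ennreal_leI)
qed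

lemma emeasure_sigma_dot_le_subtree:
  assumes A: "A \<in> sets borel" and i: "i < 2 ^ g"
    and sub: "\<And>k j. j < 2 ^ k \<Longrightarrow> cantor_center N k j \<in> A \<Longrightarrow> cantor_center N k j \<in> cantor_int N g i"
  shows "emeasure \<sigma> A \<le> ennreal (2 / (real N ^ (2 * g) * measure \<omega> (cantor_int N g i)))"
proof -
  define Y where "Y = real N ^ (2 * g) * measure \<omega> (cantor_int N g i)"
  define q :: real where "q = 64 / (15 * real N ^ 2)"
  define b where "b k = (if k < g then 0 else q ^ (k - g) / Y)" for k
  have Y: "0 < Y" unfolding Y_def using measure_cantor_int_pos[OF i] N_ge_16 by simp
  have q: "0 \<le> q" "q \<le> 1/2"
    using N_ge_16 power_mono[of 16 "real N" 2] unfolding q_def by (auto simp: divide_simps)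
  have "(\<lambda>t. b (t + g)) sums (1 / (1 - q) / Y)"
    using sums_divide[OF geometric_sums[of q], of Y] q unfolding b_def by simp
  then have "b sums (1 / (1 - q) / Y)"
    using sums_iff_shift[of b g] by (simp add: b_def)
  then have sums: "(\<lambda>k. ennreal (b k)) sums ennreal (1 / (1 - q) / Y)"
    using Y q by (subst sums_ennreal) (auto simp: b_def)
  have "emeasure \<sigma> A \<le> (\<Sum>k. ennreal (b k))"
    unfolding emeasure_sigma_dot[OF A] b_def q_def Y_def
    using sigma_dot_generation_eq_0[OF _ i sub] sigma_dot_generation_le[OF _ i sub]
    by (intro suminf_le) (auto simp: not_less)
  also have "\<dots> = ennreal (1 / (1 - q) / Y)"
    using sums by (simp add: sums_iff)
  also have "1 / (1 - q) / Y \<le> 2 / Y"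
    using q Y by (intro divide_right_mono) (auto simp: divide_simps)
  finally show ?thesis by (simp add: Y_def ennreal_leI)
qed

lemma emeasure_sigma_dot_le_atom:
  assumes A: "A \<in> sets borel" and j0: "j0 < 2 ^ k0"
    and only: "\<And>k j. j < 2 ^ k \<Longrightarrow> cantor_center N k j \<in> A \<Longrightarrow> k = k0 \<and> j = j0"
  shows "emeasure \<sigma> A \<le> ennreal (cantor_weight N \<omega> k0 j0)"
proof -
  define X where "X = ennreal (cantor_weight N \<omega> k0 j0)"
  have generation: "(\<Sum>j<2 ^ k. ennreal (cantor_weight N \<omega> k j) * indicator A (cantor_center N k j))
      \<le> (if k = k0 then X else 0)" for k
  proof -
    have "(\<Sum>j<2 ^ k. ennreal (cantor_weight N \<omega> k j) * indicator A (cantor_center N k j))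
        \<le> (\<Sum>j<2 ^ k. if k = k0 \<and> j = j0 then X else 0)"
    proof (intro sum_mono)
      fix j :: nat assume "j \<in> {..<2 ^ k}"
      then show "ennreal (cantor_weight N \<omega> k j) * indicator A (cantor_center N k j)
          \<le> (if k = k0 \<and> j = j0 then X else 0)"
        using only[of j k] unfolding X_def by (cases "cantor_center N k j \<in> A") auto
    qed
    also have "\<dots> = (if k = k0 then X else 0)"
      using j0 by (cases "k = k0") (simp_all add: sum.delta)
    finally show ?thesis .
  qed
  have "emeasure \<sigma> A \<le> (\<Sum>k. if k = k0 then X else 0)"
    unfolding emeasure_sigma_dot[OF A] using generation by (intro suminf_le) auto
  then show ?thesis
    using sums_single[of k0 "\<lambda>_. X"] unfolding X_def by (simp add: sums_iff)
qed

lemma emeasure_sigma_dot_UNIV_le: "emeasure \<sigma> UNIV \<le> 2"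
proof -
  have "cantor_center N k j \<in> cantor_int N 0 0" for k j
    using cantor_center_in_ancestor[of N 0 k j] N_ge_16 by (simp add: cantor_int_0)
  then show ?thesis
    using emeasure_sigma_dot_le_subtree[of UNIV 0 0] by (simp add: measure_cantor_int_0)
qed

lemma finite_measure_sigma_dot: "finite_measure \<sigma>"
  using emeasure_sigma_dot_UNIV_le by (intro finite_measureI) (auto simp: space_sigma_dot top_unique)

lemma measure_sigma_dot_le: "emeasure \<sigma> A \<le> ennreal x \<Longrightarrow> 0 \<le> x \<Longrightarrow> measure \<sigma> A \<le> x"
  using finite_measure.emeasure_eq_measure[OF finite_measure_sigma_dot, of A] by simp

lemma cantor_weight_le_emeasure_sigma_dot:
  assumes "j < 2 ^ k"
  shows "ennreal (cantor_weight N \<omega> k j) \<le> emeasure \<sigma> (cantor_int N k j)"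
proof -
  let ?a = "\<lambda>k' j'. ennreal (cantor_weight N \<omega> k' j') * indicator (cantor_int N k j) (cantor_center N k' j')"
  have "ennreal (cantor_weight N \<omega> k j) = ?a k j"
    using cantor_center_in_int by simp
  also have "\<dots> \<le> (\<Sum>j'<2 ^ k. ?a k j')"
    using assms by (intro member_le_sum) auto
  also have "\<dots> \<le> (\<Sum>k'. \<Sum>j'<2 ^ k'. ?a k' j')"
    using sum_le_suminf[of "\<lambda>k'. \<Sum>j'<2 ^ k'. ?a k' j'" "{k}"] by (simp add: summableI)
  also have "\<dots> = emeasure \<sigma> (cantor_int N k j)"
    by (rule emeasure_sigma_dot[symmetric]) (simp add: cantor_int_def)
  finally show ?thesis .
qed

end

text \<open>I^h_i is the deepest Cantor interval of generation at most m hit by the ball of its own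
  generation around c. Its ancestors are then the only intervals hit at generations g \<le> h.\<close>
locale deepest_hit = redistributed_cantor +
  fixes c :: real and m h i :: nat
  assumes h_le_m: "h \<le> m" and hits: "cantor_hits N c h i"
    and deepest: "\<And>g i'. g \<le> m \<Longrightarrow> cantor_hits N c g i' \<Longrightarrow> g \<le> h"
begin

abbreviation level_ball :: "nat \<Rightarrow> real set" where "level_ball g \<equiv> cball c (1 / real N ^ g)"

definition ancestor :: "nat \<Rightarrow> nat" where "ancestor g = i div 2 ^ (h - g)"

lemma i_less: "i < 2 ^ h"
  using hits unfolding cantor_hits_def by simp

lemma ancestor_less: "g \<le> h \<Longrightarrow> ancestor g < 2 ^ g"
  unfolding ancestor_def using div_power_diff_less[OF i_less] by simp

lemma ancestor_hits: "g \<le> h \<Longrightarrow> cantor_hits N c g (ancestor g)"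
  using hits ancestor_less cantor_int_descendant_subset[of N g h i] cball_power_antimono[of N g h c] N_ge_16
  unfolding cantor_hits_def ancestor_def by auto

lemma hits_iff_ancestor: "g \<le> m \<Longrightarrow> cantor_hits N c g i' \<longleftrightarrow> g \<le> h \<and> i' = ancestor g"
  using cantor_hits_unique[of N c g i' "ancestor g"] deepest ancestor_hits N_ge_16 by auto

lemma ancestor_Suc_div:
  assumes "g < h"
  shows "ancestor (Suc g) div 2 = ancestor g"
proof -
  have "h - g = Suc (h - Suc g)" using assms by simp
  then show ?thesis unfolding ancestor_def by (simp add: div_mult2_eq power_Suc2 del: power_Suc)
qed

lemma level_ball_inter_cantor_set_subset:
  assumes "g \<le> h"
  shows "level_ball g \<inter> cantor_set N \<subseteq> cantor_int N g (ancestor g)"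
proof
  fix x assume x: "x \<in> level_ball g \<inter> cantor_set N"
  then obtain i' where "i' < 2 ^ g" "x \<in> cantor_int N g i'"
    using cantor_set_subset_generation[of N g] by blast
  with x have "cantor_hits N c g i'" unfolding cantor_hits_def by blast
  then show "x \<in> cantor_int N g (ancestor g)"
    using hits_iff_ancestor[of g i'] assms h_le_m \<open>x \<in> cantor_int N g i'\<close> by simp
qed

lemma level_ball_inter_cantor_set_empty: "h < g \<Longrightarrow> g \<le> m \<Longrightarrow> level_ball g \<inter> cantor_set N = {}"
  using cantor_set_subset_generation[of N g] hits_iff_ancestor[of g] unfolding cantor_hits_def by fastforce

lemma cantor_center_in_level_ball_cases:
  assumes g: "g \<le> m" and j: "j < 2 ^ k" and z: "cantor_center N k j \<in> level_ball g"
  shows "g \<le> h \<and> cantor_center N k j \<in> cantor_int N g (ancestor g) \<or> h < g \<and> k = h \<and> j = i"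
proof (cases "g \<le> k")
  case True
  have "cantor_center N k j \<in> cantor_int N g (j div 2 ^ (k - g))"
    using cantor_center_in_ancestor[OF _ True] N_ge_16 by simp
  moreover have "j div 2 ^ (k - g) < 2 ^ g" using div_power_diff_less[OF j True] .
  ultimately have "cantor_hits N c g (j div 2 ^ (k - g))"
    using z unfolding cantor_hits_def by blast
  then show ?thesis using hits_iff_ancestor[OF g] \<open>cantor_center N k j \<in> cantor_int N g _\<close> by auto
next
  case False
  have "level_ball g \<subseteq> level_ball k" "level_ball g \<subseteq> level_ball (Suc k)"
    using False cball_power_antimono[of N k g c] cball_power_antimono[of N "Suc k" g c] N_ge_16 by auto
  with z have zk: "cantor_center N k j \<in> level_ball k" and zk': "cantor_center N k j \<in> level_ball (Suc k)" by auto
  have "cantor_hits N c k j"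
    using j zk cantor_center_in_int[of N k j] unfolding cantor_hits_def by blast
  then have k: "k \<le> h" "j = ancestor k"
    using hits_iff_ancestor[of k j] False g by auto
  text \<open>The centre of I^k_j is at distance > 2 N^-(k+1) from both children of I^k_j, so no ball of
    radius N^-(k+1) meets one of them and contains the centre.\<close>
  have "\<not> k < h"
  proof
    assume "k < h"
    then obtain y where y: "y \<in> level_ball (Suc k)" "y \<in> cantor_int N (Suc k) (ancestor (Suc k))"
      using ancestor_hits[of "Suc k"] unfolding cantor_hits_def by auto
    have "1 / (2 * real N ^ k) - 1 / real N ^ Suc k \<le> \<bar>y - cantor_center N k j\<bar>"
      using cantor_center_dist_child[OF y(2)] ancestor_Suc_div[OF \<open>k < h\<close>] k(2) by simp
    also have "\<dots> \<le> 1 / real N ^ Suc k + 1 / real N ^ Suc k"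
      using y(1) zk' unfolding mem_cball dist_real_def by linarith
    finally show False using N_ge_16 by (simp add: divide_simps)
  qed
  then show ?thesis using k False ancestor_def by simp
qed

lemma emeasure_level_ball_le_ancestor:
  assumes "g \<le> h"
  shows "emeasure \<sigma> (level_ball g) \<le> ennreal (2 / (real N ^ (2 * g) * measure \<omega> (cantor_int N g (ancestor g))))"
proof (rule emeasure_sigma_dot_le_subtree)
  fix k j assume "j < 2 ^ k" "cantor_center N k j \<in> level_ball g"
  then show "cantor_center N k j \<in> cantor_int N g (ancestor g)"
    using cantor_center_in_level_ball_cases[of g j k] assms h_le_m by auto
qed (use assms ancestor_less in \<open>auto simp: borel_closed\<close>)

lemma emeasure_level_ball_le_deepest:
  assumes "h < g" "g \<le> m"
  shows "emeasure \<sigma> (level_ball g) \<le> ennreal (cantor_weight N \<omega> h i)"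
proof (rule emeasure_sigma_dot_le_atom)
  fix k j assume "j < 2 ^ k" "cantor_center N k j \<in> level_ball g"
  then show "k = h \<and> j = i"
    using cantor_center_in_level_ball_cases[of g j k] assms by auto
qed (use i_less in \<open>auto simp: borel_closed\<close>)

abbreviation \<omega>_deepest :: real where "\<omega>_deepest \<equiv> measure \<omega> (cantor_int N h i)"

lemma \<omega>_deepest_pos: "0 < \<omega>_deepest"
  using measure_cantor_int_pos[OF i_less] .

lemma deepest_scale_bounds: "1 \<le> real N ^ (2 * h) * \<omega>_deepest" "real N ^ (2 * h) * \<omega>_deepest \<le> (real N ^ m)\<^sup>2"
proof -
  have "1 \<le> (real N ^ 2 * (15/32)) ^ h"
    using N_ge_16 power_mono[of 16 "real N" 2] by (intro one_le_power) auto
  also have "\<dots> = real N ^ (2 * h) * (15/32) ^ h"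
    by (simp only: power_mult power_mult_distrib)
  also have "\<dots> \<le> real N ^ (2 * h) * \<omega>_deepest"
    using measure_cantor_int_lower[OF i_less] by (intro mult_left_mono) auto
  finally show "1 \<le> real N ^ (2 * h) * \<omega>_deepest" .
  have "real N ^ (2 * h) * \<omega>_deepest \<le> real N ^ (2 * h)"
    using prob_le_1 by (intro mult_left_le) auto
  also have "\<dots> \<le> real N ^ (2 * m)"
    using N_ge_16 h_le_m by (intro power_increasing) auto
  finally show "real N ^ (2 * h) * \<omega>_deepest \<le> (real N ^ m)\<^sup>2"
    by (simp add: power_mult[symmetric] mult.commute)
qed

lemma sum_upto_deepest: "(\<Sum>g\<le>m. if g \<le> h then f g else 0) = (\<Sum>g\<le>h. f g)"
proof -
  have "{g \<in> {..m}. g \<le> h} = {..h}" using h_le_m by auto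
  then show ?thesis by (simp add: sum.inter_filter[symmetric])
qed

lemma ball_term_\<omega>_le:
  assumes "g \<le> m"
  shows "real N ^ (2 * g) * measure \<omega> (level_ball g)
    \<le> (if g \<le> h then (real N ^ 2) ^ g * (32/15) ^ (h - g) * \<omega>_deepest else 0)"
proof (cases "g \<le> h")
  case True
  have "(15/32) ^ (h - g) * measure \<omega> (cantor_int N g (ancestor g)) \<le> \<omega>_deepest"
    using measure_cantor_int_descendant_bounds(1)[OF i_less True] by (simp add: ancestor_def)
  then have "measure \<omega> (cantor_int N g (ancestor g)) \<le> (32/15) ^ (h - g) * \<omega>_deepest"
    by (simp add: power_divide field_simps)
  moreover have "measure \<omega> (level_ball g) \<le> measure \<omega> (cantor_int N g (ancestor g))"
    using level_ball_inter_cantor_set_subset[OF True]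
    by (intro measure_le_if_cantor_subset) (auto simp: borel_closed cantor_int_def)
  ultimately show ?thesis
    using True by (simp add: mult_left_mono power_mult mult.assoc)
next
  case False
  then show ?thesis
    using level_ball_inter_cantor_set_empty assms by (simp add: measure_eq_0_if_disjoint_cantor_set borel_closed)
qed

lemma ball_mass_sum_\<omega>_le: "ball_mass_sum N \<omega> c m \<le> 2 * real N ^ (2 * h) * \<omega>_deepest"
proof -
  have "ball_mass_sum N \<omega> c m
      \<le> (\<Sum>g\<le>m. if g \<le> h then (real N ^ 2) ^ g * (32/15) ^ (h - g) * \<omega>_deepest else 0)"
    unfolding ball_mass_sum_def using ball_term_\<omega>_le by (intro sum_mono) auto
  also have "\<dots> = (\<Sum>g\<le>h. (real N ^ 2) ^ g * (32/15) ^ (h - g)) * \<omega>_deepest"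
    by (simp add: sum_upto_deepest sum_distrib_right)
  also have "\<dots> \<le> 2 * (real N ^ 2) ^ h * \<omega>_deepest"
    using N_ge_16 power_mono[of 16 "real N" 2] \<omega>_deepest_pos
    by (intro mult_right_mono sum_power_mult_power_diff_le) auto
  finally show ?thesis by (simp add: power_mult)
qed

lemma ball_term_\<sigma>_le:
  assumes "g \<le> m"
  shows "real N ^ (2 * g) * measure \<sigma> (level_ball g)
    \<le> (if g \<le> h then 2 * (17/32) ^ (h - g) / \<omega>_deepest else 0)
      + real N ^ (2 * g) / (real N ^ (2 * h) * \<omega>_deepest)"
proof (cases "g \<le> h")
  case True
  define p where "p = measure \<omega> (cantor_int N g (ancestor g))"
  have p: "0 < p" unfolding p_def using measure_cantor_int_pos ancestor_less True by blast
  have "measure \<sigma> (level_ball g) \<le> 2 / (real N ^ (2 * g) * p)"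
    using emeasure_level_ball_le_ancestor[OF True] p by (intro measure_sigma_dot_le) (simp_all add: p_def)
  then have "real N ^ (2 * g) * measure \<sigma> (level_ball g) \<le> real N ^ (2 * g) * (2 / (real N ^ (2 * g) * p))"
    by (rule mult_left_mono) simp
  also have "\<dots> = 2 / p" using N_ge_16 by simp
  also have "\<dots> \<le> 2 * (17/32) ^ (h - g) / \<omega>_deepest"
    using measure_cantor_int_descendant_bounds(2)[OF i_less True] p \<omega>_deepest_pos
    by (simp add: ancestor_def p_def divide_simps mult.commute)
  finally have "real N ^ (2 * g) * measure \<sigma> (level_ball g) \<le> 2 * (17/32) ^ (h - g) / \<omega>_deepest" .
  moreover have "0 \<le> real N ^ (2 * g) / (real N ^ (2 * h) * \<omega>_deepest)" using \<omega>_deepest_pos by simp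
  ultimately show ?thesis using True by (simp add: add_increasing2)
next
  case False
  have "measure \<sigma> (level_ball g) \<le> 1 / (real N ^ (2 * h) * \<omega>_deepest)"
    using emeasure_level_ball_le_deepest[of g] False assms \<omega>_deepest_pos
    by (intro measure_sigma_dot_le) (simp_all add: cantor_weight_def)
  then have "real N ^ (2 * g) * measure \<sigma> (level_ball g)
      \<le> real N ^ (2 * g) * (1 / (real N ^ (2 * h) * \<omega>_deepest))"
    by (rule mult_left_mono) simp
  then show ?thesis using False by simp
qed

lemma ball_mass_sum_\<sigma>_le: "ball_mass_sum N \<sigma> c m \<le> 8 * (real N ^ m)\<^sup>2 / (real N ^ (2 * h) * \<omega>_deepest)"
proof -
  define Y where "Y = 1 / (real N ^ (2 * h) * \<omega>_deepest)"
  have Y: "0 \<le> Y" unfolding Y_def using \<omega>_deepest_pos by simp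
  have "ball_mass_sum N \<sigma> c m
      \<le> (\<Sum>g\<le>m. (if g \<le> h then 2 * (17/32) ^ (h - g) / \<omega>_deepest else 0) + real N ^ (2 * g) * Y)"
    unfolding ball_mass_sum_def Y_def using ball_term_\<sigma>_le by (intro sum_mono) simp
  also have "\<dots> = 2 * (\<Sum>g\<le>h. (17/32::real) ^ (h - g)) / \<omega>_deepest
      + (\<Sum>g\<le>m. (real N ^ 2) ^ g * 1 ^ (m - g)) * Y"
    by (simp add: sum.distrib sum_upto_deepest sum_distrib_left sum_distrib_right sum_divide_distrib power_mult)
  finally have sum: "ball_mass_sum N \<sigma> c m \<le> 2 * (\<Sum>g\<le>h. (17/32::real) ^ (h - g)) / \<omega>_deepest
      + (\<Sum>g\<le>m. (real N ^ 2) ^ g * 1 ^ (m - g)) * Y" .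
  have "2 * (\<Sum>g\<le>h. (17/32::real) ^ (h - g)) / \<omega>_deepest \<le> 2 * (32/15) / \<omega>_deepest"
    using \<omega>_deepest_pos sum_power_diff_le[of "17/32" h] by (intro divide_right_mono) auto
  also have "\<dots> = 64/15 * real N ^ (2 * h) * Y"
    unfolding Y_def using N_ge_16 by simp
  also have "\<dots> \<le> 6 * real N ^ (2 * m) * Y"
    using Y N_ge_16 h_le_m by (intro mult_right_mono mult_mono power_increasing) auto
  finally have deep: "2 * (\<Sum>g\<le>h. (17/32::real) ^ (h - g)) / \<omega>_deepest \<le> 6 * real N ^ (2 * m) * Y" .
  have "(\<Sum>g\<le>m. (real N ^ 2) ^ g * 1 ^ (m - g)) * Y \<le> 2 * (real N ^ 2) ^ m * Y"
    using Y N_ge_16 power_mono[of 16 "real N" 2]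
    by (intro mult_right_mono sum_power_mult_power_diff_le) auto
  also have "\<dots> = 2 * real N ^ (2 * m) * Y" by (simp add: power_mult)
  moreover have "8 * (real N ^ m)\<^sup>2 / (real N ^ (2 * h) * \<omega>_deepest) = 8 * real N ^ (2 * m) * Y"
    by (simp add: Y_def power_mult[symmetric] mult.commute)
  ultimately show ?thesis using sum deep by linarith
qed

end

context redistributed_cantor
begin

lemma obtain_deepest_hit:
  assumes "cantor_hits N c 0 0"
  obtains h i where "deepest_hit N \<omega> c m h i"
proof -
  define P where "P g \<longleftrightarrow> g \<le> m \<and> (\<exists>i. cantor_hits N c g i)" for g
  define h where "h = (GREATEST g. P g)"
  have "P 0" using assms unfolding P_def by blast
  then have "P h" unfolding h_def by (rule GreatestI_nat[where b = m]) (simp add: P_def)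
  then obtain i where "h \<le> m" "cantor_hits N c h i" unfolding P_def by blast
  moreover have "g \<le> h" if "g \<le> m" "cantor_hits N c g i'" for g i'
    unfolding h_def using that by (intro Greatest_le_nat[of P g m]) (auto simp: P_def)
  ultimately have "deepest_hit N \<omega> c m h i" by unfold_locales auto
  then show thesis by (rule that)
qed

lemma ball_mass_sum_eq_0_if_no_hit:
  assumes "\<not> cantor_hits N c 0 0"
  shows "ball_mass_sum N \<omega> c m = 0" "ball_mass_sum N \<sigma> c m = 0"
proof -
  have disjoint: "cball c (1 / real N ^ g) \<inter> {0..1} = {}" for g
    using assms cball_power_antimono[of N 0 g c] N_ge_16 unfolding cantor_hits_def by (auto simp: cantor_int_0)
  have "measure \<omega> (cball c (1 / real N ^ g)) = 0" for g
    using cantor_set_subset_unit[of N] disjoint[of g]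
    by (intro measure_eq_0_if_disjoint_cantor_set) (auto simp: borel_closed)
  moreover have "measure \<sigma> (cball c (1 / real N ^ g)) = 0" for g
    using emeasure_sigma_dot_eq_0[of N "cball c (1 / real N ^ g)" \<omega>] disjoint[of g] N_ge_16
    by (simp add: measure_def borel_closed)
  ultimately show "ball_mass_sum N \<omega> c m = 0" "ball_mass_sum N \<sigma> c m = 0"
    by (simp_all add: ball_mass_sum_def)
qed

lemma ball_mass_sums_balanced:
  obtains u where "1 \<le> u" "u \<le> (real N ^ m)\<^sup>2"
    "ball_mass_sum N \<omega> c m \<le> 2 * u" "ball_mass_sum N \<sigma> c m \<le> 8 * (real N ^ m)\<^sup>2 / u"
proof (cases "cantor_hits N c 0 0")
  case True
  then obtain h i where "deepest_hit N \<omega> c m h i" by (rule obtain_deepest_hit)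
  then interpret deepest_hit N \<omega> c m h i .
  show thesis
    using deepest_scale_bounds ball_mass_sum_\<omega>_le ball_mass_sum_\<sigma>_le
    by (intro that[of "real N ^ (2 * h) * \<omega>_deepest"]) (simp_all add: mult.assoc)
next
  case False
  moreover have "1 \<le> (real N ^ m)\<^sup>2" using N_ge_16 by (simp add: one_le_power)
  ultimately show thesis
    using ball_mass_sum_eq_0_if_no_hit by (intro that[of 1]) simp_all
qed

lemma poisson_product_le_of_short:
  assumes I: "bounded I" "I \<noteq> {}" and l: "0 < Sup I - Inf I" "Sup I - Inf I < 1"
  shows "poisson_P I \<omega> * poisson_P I \<sigma> \<le> ennreal (500 * real N ^ 4)"
proof -
  have "2 \<le> N" using N_ge_16 by simp
  then obtain m where m: "1 / real N ^ Suc m \<le> Sup I - Inf I" "Sup I - Inf I < 1 / real N ^ m"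
    using exists_power_scale[OF _ l] by blast
  define c where "c = (Inf I + Sup I) / 2"
  obtain u where u: "1 \<le> u" "u \<le> (real N ^ m)\<^sup>2"
    and S: "ball_mass_sum N \<omega> c m \<le> 2 * u" "ball_mass_sum N \<sigma> c m \<le> 8 * (real N ^ m)\<^sup>2 / u"
    by (rule ball_mass_sums_balanced)
  have S0: "0 \<le> ball_mass_sum N \<mu> c m" for \<mu> unfolding ball_mass_sum_def by (simp add: sum_nonneg)
  have "poisson_P I \<omega> \<le> ennreal ((4 * real N ^ 2 * ball_mass_sum N \<omega> c m + 4 * measure \<omega> UNIV) / real N ^ m)"
    unfolding c_def using N_ge_16 I m
    by (intro poisson_P_le_ball_mass_sum) (auto simp: sets_\<omega> finite_measure_axioms)
  also have "measure \<omega> UNIV = 1" using prob_space space_\<omega> by simp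
  finally have P\<omega>: "poisson_P I \<omega> \<le> ennreal ((4 * real N ^ 2 * ball_mass_sum N \<omega> c m + 4) / real N ^ m)"
    by simp
  have "poisson_P I \<sigma> \<le> ennreal ((4 * real N ^ 2 * ball_mass_sum N \<sigma> c m + 4 * measure \<sigma> UNIV) / real N ^ m)"
    unfolding c_def using N_ge_16 I m
    by (intro poisson_P_le_ball_mass_sum) (auto simp: sets_sigma_dot finite_measure_sigma_dot)
  also have "\<dots> \<le> ennreal ((4 * real N ^ 2 * ball_mass_sum N \<sigma> c m + 8) / real N ^ m)"
    using measure_sigma_dot_le[of UNIV 2] emeasure_sigma_dot_UNIV_le N_ge_16
    by (intro ennreal_leI divide_right_mono) auto
  finally have P\<sigma>: "poisson_P I \<sigma> \<le> ennreal ((4 * real N ^ 2 * ball_mass_sum N \<sigma> c m + 8) / real N ^ m)" .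
  have "poisson_P I \<omega> * poisson_P I \<sigma>
      \<le> ennreal ((4 * real N ^ 2 * ball_mass_sum N \<omega> c m + 4) / real N ^ m)
        * ennreal ((4 * real N ^ 2 * ball_mass_sum N \<sigma> c m + 8) / real N ^ m)"
    using P\<omega> P\<sigma> by (rule mult_mono) auto
  also have "\<dots> = ennreal ((4 * real N ^ 2 * ball_mass_sum N \<omega> c m + 4) / real N ^ m
      * ((4 * real N ^ 2 * ball_mass_sum N \<sigma> c m + 8) / real N ^ m))"
    by (rule ennreal_mult[symmetric]) (simp_all add: S0)
  also have "\<dots> \<le> ennreal (500 * real N ^ 4)"
    by (intro ennreal_leI balanced_product_le) (use u S S0 N_ge_16 in \<open>auto simp: one_le_power\<close>)
  finally show ?thesis .
qed

lemma poisson_product_le: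
  assumes I: "bounded I" "I \<noteq> {}"
  shows "poisson_P I \<omega> * poisson_P I \<sigma> \<le> ennreal (500 * real N ^ 4)"
proof -
  obtain y where "y \<in> I" using I(2) by blast
  then have "Inf I \<le> Sup I"
    using I(1) by (meson bounded_imp_bdd_above bounded_imp_bdd_below cInf_lower cSup_upper order_trans)
  then consider "Sup I - Inf I = 0" | "0 < Sup I - Inf I" "Sup I - Inf I < 1" | "1 \<le> Sup I - Inf I"
    by linarith
  then show ?thesis
  proof cases
    case 3
    have "1 \<le> real N ^ 4" using N_ge_16 by (simp add: one_le_power)
    have "poisson_P I \<omega> \<le> 1"
      using poisson_P_le_emeasure_space[OF 3, of \<omega>] emeasure_space_1 by simp
    moreover have "poisson_P I \<sigma> \<le> 2"
      using poisson_P_le_emeasure_space[OF 3, of \<sigma>] emeasure_sigma_dot_UNIV_le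
      by (simp add: space_sigma_dot)
    ultimately have "poisson_P I \<omega> * poisson_P I \<sigma> \<le> 1 * 2" by (rule mult_mono) auto
    also have "\<dots> \<le> ennreal (500 * real N ^ 4)"
      using \<open>1 \<le> real N ^ 4\<close> by (simp add: ennreal_leI flip: ennreal_numeral)
    finally show ?thesis .
  qed (simp_all add: poisson_P_eq_0 poisson_product_le_of_short I)
qed

lemma one_le_poisson_product_cantor_int:
  assumes j: "j < 2 ^ k"
  shows "1 \<le> poisson_P (cantor_int N k j) \<omega> * poisson_P (cantor_int N k j) \<sigma>"
proof -
  define p where "p = measure \<omega> (cantor_int N k j)"
  have p: "0 < p" unfolding p_def using measure_cantor_int_pos[OF j] .
  have I: "cantor_int N k j = {cantor_left N k j .. cantor_left N k j + 1 / real N ^ k}"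
    unfolding cantor_int_def ..
  have r: "0 < 1 / real N ^ k" using N_ge_16 by simp
  have "ennreal (real N ^ k) * ennreal (cantor_weight N \<omega> k j)
      \<le> ennreal (real N ^ k) * emeasure \<sigma> (cantor_int N k j)"
    using cantor_weight_le_emeasure_sigma_dot[OF j] by (rule mult_left_mono) simp
  also have "\<dots> \<le> poisson_P (cantor_int N k j) \<sigma>"
    using poisson_P_atLeastAtMost_ge[OF r, of _ \<sigma>] unfolding I by (simp add: sets_sigma_dot)
  finally have \<sigma>: "ennreal (real N ^ k) * ennreal (cantor_weight N \<omega> k j) \<le> poisson_P (cantor_int N k j) \<sigma>" .
  have "ennreal (real N ^ k) * ennreal p \<le> poisson_P (cantor_int N k j) \<omega>"
    using poisson_P_atLeastAtMost_ge[OF r, of _ \<omega>] unfolding I p_def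
    by (simp add: sets_\<omega> emeasure_eq_measure)
  then have "ennreal (real N ^ k) * ennreal p * (ennreal (real N ^ k) * ennreal (cantor_weight N \<omega> k j))
      \<le> poisson_P (cantor_int N k j) \<omega> * poisson_P (cantor_int N k j) \<sigma>"
    using \<sigma> by (rule mult_mono) auto
  moreover have "real N ^ k * p * (real N ^ k * cantor_weight N \<omega> k j) = 1"
    using p N_ge_16 unfolding cantor_weight_def p_def[symmetric] by (simp add: power_mult_distrib power_mult field_simps power2_eq_square)
  ultimately show ?thesis
    using p cantor_weight_nonneg by (simp add: ennreal_mult[symmetric] del: ennreal_mult)
qed

end

theorem mainTheorem5:
  fixes N :: nat and \<omega> :: "real measure"
  assumes "N \<ge> 16"
    and "redistributed_cantor_measure N \<omega>"
  shows "\<exists>C::real. 0 < C \<and>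
     (\<forall>I::real set. is_interval I \<and> bounded I \<and> I \<noteq> {} \<longrightarrow>
        poisson_P I \<omega> * poisson_P I (sigma_dot N \<omega>) \<le> ennreal C) \<and>
     (\<forall>k j. j < 2^k \<longrightarrow>
        ennreal (1 / C) \<le> poisson_P (cantor_int N k j) \<omega> * poisson_P (cantor_int N k j) (sigma_dot N \<omega>))"
proof -
  interpret redistributed_cantor N \<omega> using assms by unfold_locales
  define C where "C = 500 * real N ^ 4"
  have "1 \<le> real N ^ 4" using assms(1) by (simp add: one_le_power)
  then have C: "1 \<le> C" unfolding C_def by simp
  have "ennreal (1 / C) \<le> 1" using C by (simp add: ennreal_le_1)
  then have lower: "ennreal (1 / C) \<le> poisson_P (cantor_int N k j) \<omega> * poisson_P (cantor_int N k j) \<sigma>"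
    if "j < 2 ^ k" for k j
    using one_le_poisson_product_cantor_int[OF that] by (rule order_trans)
  show ?thesis
    using C lower poisson_product_le[folded C_def] by (intro exI[of _ C]) auto
qed

end
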